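(* Consider the temporally switching linear system with $p\ge 1$ snapshots \[ \dot{x}(t)=A_i x(t)+B u(t),\qquad t\in[t_{i-1},t_i),\quad i=1,\dots,p, \] where $t_0<t_1<\dots<t_p$, $\Delta t_i=t_i-t_{i-1}>0$, $A_i\in\mathbb{R}^{n\times n}$, $B\in\mathbb{R}^{n\times m}$. Let $C_k=[\,B,\ A_kB,\ A_k^2B,\ \dots,\ A_k^{n-1}B\,]$ be the controllability matrix of the pair $(A_k,B)$ and define the temporal controllability matrix \[ \mathcal{C}_T=\big[\,C_p,\ e^{A_p\Delta t_p}C_{p-1},\ e^{A_p\Delta t_p}e^{A_{p-1}\Delta t_{p-1}}C_{p-2},\ \dots,\ e^{A_p\Delta t_p}\cdots e^{A_2\Delta t_2}C_1\,\big]. \] Then the system is completely herdable on $[t_0,t_p]$ if and only if there exists a vector $v\in\mathbb{R}^n$ with all entries strictly positive such that $v\in\operatorname{Im}(\mathcal{C}_T)=\{\mathcal{C}_T y: y\}$.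
   Context: The system is called completely herdable on $[t_0,t_f]$ if for every initial condition $x(t_0)\in\mathbb{R}^n$ and every threshold $h>0$ there exists a piecewise continuous input $u:[t_0,t_f]\to\mathbb{R}^m$ such that the resulting solution satisfies $x_j(t_f)\ge h$ for every node $j\in\{1,\dots,n\}$ simultaneously. *)

theory Defs
  imports "HOL-Analysis.Analysis"
begin

primrec matpow :: "real^'n^'n \<Rightarrow> nat \<Rightarrow> real^'n^'n" where
  "matpow M 0 = mat 1"
| "matpow M (Suc k) = M ** matpow M k"

definition mat_exp :: "real^'n^'n \<Rightarrow> real^'n^'n" where
  "mat_exp M = (\<Sum>k. (1 / fact k) *\<^sub>R matpow M k)"

definition piecewise_continuous_on :: "real \<Rightarrow> real \<Rightarrow> (real \<Rightarrow> 'a::real_normed_vector) \<Rightarrow> bool" where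
  "piecewise_continuous_on a b u \<longleftrightarrow>
     (\<exists>S. finite S \<and> continuous_on ({a..b} - S) u \<and>
        (\<forall>s\<in>S \<inter> {a..b}. (a < s \<longrightarrow> (\<exists>l. (u \<longlongrightarrow> l) (at_left s))) \<and>
                            (s < b \<longrightarrow> (\<exists>r. (u \<longlongrightarrow> r) (at_right s)))))"

text \<open>Solution of the switching system
  x'(t) = A_i x(t) + B u(t) on [t_{i-1}, t_i), i = 1..p (Caratheodory sense,
  written in integral form on each closed snapshot interval; this forces x to be
  continuous, in particular at switching times).\<close>

definition is_switching_solution ::
  "(nat \<Rightarrow> real^'n^'n) \<Rightarrow> real^'m^'n \<Rightarrow> (nat \<Rightarrow> real) \<Rightarrow> nat \<Rightarrow>
   (real \<Rightarrow> real^'m) \<Rightarrow> (real \<Rightarrow> real^'n) \<Rightarrow> bool" where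
  "is_switching_solution A B t p u x \<longleftrightarrow>
     (\<forall>i\<in>{1..p}. \<forall>s\<in>{t (i - 1)..t i}.
        ((\<lambda>\<tau>. A i *v x \<tau> + B *v u \<tau>) has_integral (x s - x (t (i - 1)))) {t (i - 1)..s})"

definition completely_herdable ::
  "(nat \<Rightarrow> real^'n^'n) \<Rightarrow> real^'m^'n \<Rightarrow> (nat \<Rightarrow> real) \<Rightarrow> nat \<Rightarrow> bool" where
  "completely_herdable A B t p \<longleftrightarrow>
     (\<forall>x0 :: real^'n. \<forall>h :: real. h > 0 \<longrightarrow>
        (\<exists>u :: real \<Rightarrow> real^'m. piecewise_continuous_on (t 0) (t p) u \<and>
           (\<exists>x. is_switching_solution A B t p u x \<and> x (t 0) = x0 \<and>
                (\<forall>j. x (t p) $ j \<ge> h))))"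

text \<open>Delta t_i, the transition factor e^{A_p dt_p} ... e^{A_{k+1} dt_{k+1}}
  multiplying C_k in the temporal controllability matrix, and its image.\<close>

definition dt :: "(nat \<Rightarrow> real) \<Rightarrow> nat \<Rightarrow> real" where
  "dt t i = t i - t (i - 1)"

definition transition :: "(nat \<Rightarrow> real^'n^'n) \<Rightarrow> (nat \<Rightarrow> real) \<Rightarrow> nat \<Rightarrow> nat \<Rightarrow> real^'n^'n" where
  "transition A t p k =
     foldl (\<lambda>M j. M ** mat_exp (dt t j *\<^sub>R A j)) (mat 1) (rev [Suc k..<Suc p])"

text \<open>C_T y, where y is split into blocks: y k l \<in> R^m is the block of y
  multiplying the column block A_k^l B of C_k (k = 1..p, l = 0..n-1).\<close>

definition temporal_ctrb_apply ::
  "(nat \<Rightarrow> real^'n^'n) \<Rightarrow> real^'m^'n \<Rightarrow> (nat \<Rightarrow> real) \<Rightarrow> nat \<Rightarrow> (nat \<Rightarrow> nat \<Rightarrow> real^'m) \<Rightarrow> real^'n" where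
  "temporal_ctrb_apply A B t p y =
     (\<Sum>k\<in>{1..p}. \<Sum>l<CARD('n). (transition A t p k ** matpow (A k) l ** B) *v y k l)"

definition temporal_ctrb_image ::
  "(nat \<Rightarrow> real^'n^'n) \<Rightarrow> real^'m^'n \<Rightarrow> (nat \<Rightarrow> real) \<Rightarrow> nat \<Rightarrow> (real^'n) set" where
  "temporal_ctrb_image A B t p = {temporal_ctrb_apply A B t p y | y. True}"

end

(*
  On a snapshot [a, b] the solution satisfies x(b) = exp((b - a) A) x(a) + w, where the input term
  w = int_a^b exp((b - s) A) B u(s) ds ranges exactly over Im C, C = [B, AB, ..., A^(n-1) B].
  It stays in Im C because Im C contains Im B and is invariant under A, hence under every exp(s A).
  It fills Im C because a vector eta orthogonal to all input terms satisfies eta . exp(-s A) B = 0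
  on (a, b) (test with u(s) = phi(s) B^T exp(-s A^T) eta for a bump phi), hence, differentiating
  in s, eta . exp(-s A) A^l B = 0 for every l.
  Composing the snapshots, the states reachable at t_p from x_0 form the affine space
  Phi x_0 + Im C_T, where Phi = exp(A_p dt_p) ... exp(A_1 dt_1). A positive vector v in Im C_T
  gives Phi x_0 + c v >= h for c large; conversely, herding 0 above the level 1 produces a
  positive vector of Im C_T.
*)

theory Submission
  imports Defs
begin

section \<open>Matrices as a Banach algebra\<close>

text \<open>The type \<open>real^'n^'n\<close> carries the componentwise product and the Frobenius norm. This copy
  carries the matrix product and the operator norm instead, which makes it a Banach algebra, so
  that the library's \<open>exp\<close> and its calculus apply to matrices.\<close>

typedef ('n::finite) sq_matrix = "UNIV :: (real^'n^'n) set"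
  morphisms mat_of sq_of
  by simp

setup_lifting type_definition_sq_matrix

lemma matrix_add_rdistrib: "((A::real^'n^'m) + B) ** C = A ** C + B ** C"
  by (simp add: matrix_eq matrix_vector_mul_assoc[symmetric] matrix_vector_mult_add_rdistrib)

lemma onorm_matrix_vector_mult_eq_0: "onorm ((*v) (M::real^'n^'m)) = 0 \<longleftrightarrow> M = 0"
  by (simp add: onorm_eq_0[OF matrix_vector_mul_bounded_linear] matrix_eq fun_eq_iff)

lemma onorm_matrix_vector_mult_add_le:
  "onorm ((*v) ((M::real^'n^'m) + N)) \<le> onorm ((*v) M) + onorm ((*v) N)"
proof -
  have "(*v) (M + N) = (\<lambda>x. M *v x + N *v x)"
    by (simp add: fun_eq_iff matrix_vector_mult_add_rdistrib)
  then show ?thesis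
    using onorm_triangle[OF matrix_vector_mul_bounded_linear matrix_vector_mul_bounded_linear]
    by simp
qed

lemma onorm_matrix_vector_mult_scaleR:
  "onorm ((*v) (r *\<^sub>R (M::real^'n^'m))) = \<bar>r\<bar> * onorm ((*v) M)"
proof -
  have "(*v) (r *\<^sub>R M) = (\<lambda>x. r *\<^sub>R (M *v x))"
    by (simp add: fun_eq_iff scaleR_matrix_vector_assoc)
  then show ?thesis
    using onorm_scaleR[OF matrix_vector_mul_bounded_linear] by simp
qed

lemma onorm_matrix_vector_mult_times_le:
  "onorm ((*v) ((M::real^'n^'m) ** N)) \<le> onorm ((*v) M) * onorm ((*v) N)"
proof -
  have "(*v) (M ** N) = (*v) M \<circ> (*v) N"
    by (simp add: fun_eq_iff matrix_vector_mul_assoc)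
  then show ?thesis
    using onorm_compose[OF matrix_vector_mul_bounded_linear matrix_vector_mul_bounded_linear]
    by simp
qed

lemma onorm_matrix_vector_mult_mat_1: "onorm ((*v) (mat 1 :: real^'n^'n)) = 1"
proof -
  have "(*v) (mat 1 :: real^'n^'n) = (\<lambda>x. x)"
    by (simp add: fun_eq_iff)
  then show ?thesis
    using onorm_id by simp
qed

instantiation sq_matrix :: (finite) real_normed_algebra_1
begin

lift_definition zero_sq_matrix :: "'a sq_matrix" is 0 .
lift_definition one_sq_matrix :: "'a sq_matrix" is "mat 1" .
lift_definition plus_sq_matrix :: "'a sq_matrix \<Rightarrow> 'a sq_matrix \<Rightarrow> 'a sq_matrix" is "(+)" .
lift_definition minus_sq_matrix :: "'a sq_matrix \<Rightarrow> 'a sq_matrix \<Rightarrow> 'a sq_matrix" is "(-)" .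
lift_definition uminus_sq_matrix :: "'a sq_matrix \<Rightarrow> 'a sq_matrix" is uminus .
lift_definition scaleR_sq_matrix :: "real \<Rightarrow> 'a sq_matrix \<Rightarrow> 'a sq_matrix" is scaleR .
lift_definition times_sq_matrix :: "'a sq_matrix \<Rightarrow> 'a sq_matrix \<Rightarrow> 'a sq_matrix" is "(**)" .
lift_definition norm_sq_matrix :: "'a sq_matrix \<Rightarrow> real" is "\<lambda>M. onorm ((*v) M)" .
definition dist_sq_matrix :: "'a sq_matrix \<Rightarrow> 'a sq_matrix \<Rightarrow> real"
  where "dist_sq_matrix a b = norm (a - b)"
definition uniformity_sq_matrix :: "('a sq_matrix \<times> 'a sq_matrix) filter"
  where "uniformity_sq_matrix = (INF e\<in>{0<..}. principal {(x, y). dist x y < e})"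
definition open_sq_matrix :: "'a sq_matrix set \<Rightarrow> bool"
  where "open_sq_matrix U = (\<forall>x\<in>U. \<forall>\<^sub>F (x', y) in uniformity. x' = x \<longrightarrow> y \<in> U)"
definition sgn_sq_matrix :: "'a sq_matrix \<Rightarrow> 'a sq_matrix"
  where "sgn_sq_matrix x = inverse (norm x) *\<^sub>R x"

instance
proof
  fix a b c :: "'a sq_matrix" and r s :: real
  show "a + b + c = a + (b + c)" "a + b = b + a" "0 + a = a" "- a + a = 0" "a - b = a + - b"
    by (transfer; simp)+
  show "r *\<^sub>R (a + b) = r *\<^sub>R a + r *\<^sub>R b" "(r + s) *\<^sub>R a = r *\<^sub>R a + s *\<^sub>R a"
    "r *\<^sub>R s *\<^sub>R a = (r * s) *\<^sub>R a" "1 *\<^sub>R a = a"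
    by (transfer; simp add: scaleR_add_right scaleR_add_left)+
  show "a * b * c = a * (b * c)" by transfer (simp add: matrix_mul_assoc)
  show "(a + b) * c = a * c + b * c" by transfer (rule matrix_add_rdistrib)
  show "a * (b + c) = a * b + a * c" by transfer (rule matrix_add_ldistrib)
  show "1 * a = a" "a * 1 = a" by (transfer; simp)+
  show "r *\<^sub>R a * b = r *\<^sub>R (a * b)" by transfer (simp add: scalar_matrix_assoc)
  show "a * r *\<^sub>R b = r *\<^sub>R (a * b)" by transfer (simp add: matrix_scalar_ac scalar_matrix_assoc)
  show "(0::'a sq_matrix) \<noteq> 1"
    by transfer (simp add: vec_eq_iff mat_def)
  show "norm a = 0 \<longleftrightarrow> a = 0"
    by transfer (rule onorm_matrix_vector_mult_eq_0)
  show "norm (a + b) \<le> norm a + norm b"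
    by transfer (rule onorm_matrix_vector_mult_add_le)
  show "norm (r *\<^sub>R a) = \<bar>r\<bar> * norm a"
    by transfer (rule onorm_matrix_vector_mult_scaleR)
  show "norm (a * b) \<le> norm a * norm b"
    by transfer (rule onorm_matrix_vector_mult_times_le)
  show "norm (1::'a sq_matrix) = 1"
    by transfer (rule onorm_matrix_vector_mult_mat_1)
qed (simp_all add: dist_sq_matrix_def uniformity_sq_matrix_def open_sq_matrix_def sgn_sq_matrix_def)

end

lemma mat_of_plus [simp]: "mat_of (X + Y) = mat_of X + mat_of Y"
  and mat_of_scaleR [simp]: "mat_of (r *\<^sub>R X) = r *\<^sub>R mat_of X"
  and mat_of_times [simp]: "mat_of (X * Y) = mat_of X ** mat_of Y"
  and mat_of_one [simp]: "mat_of 1 = mat 1"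
  by (transfer, rule refl)+

lemma sq_of_plus: "sq_of (M + N) = sq_of M + sq_of N"
  and sq_of_scaleR: "sq_of (r *\<^sub>R M) = r *\<^sub>R sq_of M"
  by (metis mat_of_plus mat_of_scaleR mat_of_inverse sq_of_inverse UNIV_I)+

lemma mat_of_power: "mat_of (X ^ k) = matpow (mat_of X) k"
  by (induction k) simp_all

lemma norm_mat_of_le:
  "norm (mat_of X) \<le> real CARD('n) * real CARD('n) * norm (X :: 'n::finite sq_matrix)"
proof -
  let ?M = "mat_of X"
  have "norm ?M \<le> (\<Sum>i\<in>UNIV. norm (?M $ i))"
    unfolding norm_vec_def by (rule L2_set_le_sum) simp
  also have "\<dots> \<le> (\<Sum>i\<in>(UNIV::'n set). \<Sum>j\<in>(UNIV::'n set). \<bar>?M $ i $ j\<bar>)"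
    by (intro sum_mono norm_le_l1_cart)
  also have "\<dots> \<le> (\<Sum>i\<in>(UNIV::'n set). \<Sum>j\<in>(UNIV::'n set). norm X)"
    unfolding norm_sq_matrix.rep_eq by (intro sum_mono matrix_component_le_onorm)
  finally show ?thesis by simp
qed

lemma norm_sq_of_le:
  "norm (sq_of M :: 'n::finite sq_matrix) \<le> real CARD('n) * real CARD('n) * norm M"
proof -
  have "norm (sq_of M :: 'n sq_matrix) \<le> (\<Sum>i\<in>(UNIV::'n set). \<Sum>j\<in>(UNIV::'n set). \<bar>M $ i $ j\<bar>)"
    unfolding norm_sq_matrix.rep_eq sq_of_inverse[OF UNIV_I] by (rule onorm_le_matrix_component_sum)
  also have "\<dots> \<le> (\<Sum>i\<in>(UNIV::'n set). \<Sum>j\<in>(UNIV::'n set). norm M)"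
    by (intro sum_mono)
      (meson component_le_norm_cart Finite_Cartesian_Product.norm_nth_le order_trans)
  finally show ?thesis by simp
qed

lemma bounded_linear_mat_of: "bounded_linear (mat_of :: 'n::finite sq_matrix \<Rightarrow> _)"
  by (rule bounded_linear_intro[where K = "real CARD('n) * real CARD('n)"])
    (use norm_mat_of_le in \<open>auto simp: mult.commute\<close>)

lemma bounded_linear_sq_of: "bounded_linear (sq_of :: real^'n^'n \<Rightarrow> 'n::finite sq_matrix)"
  by (rule bounded_linear_intro[where K = "real CARD('n) * real CARD('n)"])
    (use norm_sq_of_le in \<open>auto simp: sq_of_plus sq_of_scaleR mult.commute\<close>)

instance sq_matrix :: (finite) banach
proof
  fix X :: "nat \<Rightarrow> 'a sq_matrix"
  assume "Cauchy X"
  then have "Cauchy (\<lambda>k. mat_of (X k))"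
    by (rule bounded_linear.Cauchy[OF bounded_linear_mat_of])
  then obtain L where "(\<lambda>k. mat_of (X k)) \<longlonglongrightarrow> L"
    by (auto simp: Cauchy_convergent_iff convergent_def)
  then have "(\<lambda>k. sq_of (mat_of (X k))) \<longlonglongrightarrow> sq_of L"
    by (rule bounded_linear.tendsto[OF bounded_linear_sq_of])
  then show "convergent X"
    by (auto simp: mat_of_inverse convergent_def)
qed

lemma mat_exp_eq_exp: "mat_exp M = mat_of (exp (sq_of M))"
proof -
  have "mat_of (exp (sq_of M)) = (\<Sum>k. mat_of (sq_of M ^ k /\<^sub>R fact k))"
    unfolding exp_def by (rule bounded_linear.suminf[OF bounded_linear_mat_of summable_exp_generic])
  then show ?thesis
    by (simp add: mat_exp_def mat_of_power sq_of_inverse divide_inverse_commute)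
qed

definition sq_apply :: "'n::finite sq_matrix \<Rightarrow> real^'n \<Rightarrow> real^'n"
  where "sq_apply X v = mat_of X *v v"

lemma bounded_bilinear_sq_apply: "bounded_bilinear (sq_apply :: 'n::finite sq_matrix \<Rightarrow> _)"
proof
  fix X X' :: "'n sq_matrix" and v v' :: "real^'n" and r :: real
  show "sq_apply (X + X') v = sq_apply X v + sq_apply X' v"
    "sq_apply X (v + v') = sq_apply X v + sq_apply X v'"
    "sq_apply (r *\<^sub>R X) v = r *\<^sub>R sq_apply X v"
    "sq_apply X (r *\<^sub>R v) = r *\<^sub>R sq_apply X v"
    by (simp_all add: sq_apply_def matrix_vector_mult_add_rdistrib matrix_vector_right_distrib
        scaleR_matrix_vector_assoc matrix_vector_mult_scaleR)
  show "\<exists>K. \<forall>X v. norm (sq_apply X v) \<le> norm X * norm v * K"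
    by (rule exI[of _ 1])
      (simp add: sq_apply_def norm_sq_matrix.rep_eq onorm[OF matrix_vector_mul_bounded_linear])
qed

lemmas sq_apply_add_right = bounded_bilinear.add_right[OF bounded_bilinear_sq_apply]
  and sq_apply_minus_right = bounded_bilinear.minus_right[OF bounded_bilinear_sq_apply]
  and sq_apply_scaleR_left = bounded_bilinear.scaleR_left[OF bounded_bilinear_sq_apply]
  and sq_apply_scaleR_right = bounded_bilinear.scaleR_right[OF bounded_bilinear_sq_apply]
  and sq_apply_sum_right = bounded_bilinear.sum_right[OF bounded_bilinear_sq_apply]
  and sq_apply_zero_right = bounded_bilinear.zero_right[OF bounded_bilinear_sq_apply]

lemmas continuous_on_sq_apply [continuous_intros] =
  bounded_bilinear.continuous_on[OF bounded_bilinear_sq_apply]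

lemma sq_apply_times: "sq_apply (X * Y) v = sq_apply X (sq_apply Y v)"
  by (simp add: sq_apply_def matrix_vector_mul_assoc)

lemma sq_apply_one [simp]: "sq_apply 1 v = v"
  and sq_apply_sq_of [simp]: "sq_apply (sq_of M) v = M *v v"
  by (simp_all add: sq_apply_def sq_of_inverse)

definition flow :: "real^'n^'n \<Rightarrow> real \<Rightarrow> 'n sq_matrix"
  where "flow A s = exp (s *\<^sub>R sq_of A)"

lemma mat_exp_scaleR_apply: "mat_exp (s *\<^sub>R A) *v v = sq_apply (flow A s) v"
  by (simp add: mat_exp_eq_exp sq_apply_def flow_def sq_of_scaleR)

lemma flow_zero [simp]: "flow A 0 = 1"
  by (simp add: flow_def)

lemma flow_add: "flow A (s + r) = flow A s * flow A r"
  unfolding flow_def scaleR_add_left by (rule exp_add_commuting) (simp add: algebra_simps)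

lemma sq_apply_flow_minus [simp]:
  "sq_apply (flow A (- s)) (sq_apply (flow A s) v) = v"
  "sq_apply (flow A s) (sq_apply (flow A (- s)) v) = v"
  by (simp_all flip: sq_apply_times flow_add)

lemma sq_apply_flow_matrix: "sq_apply (flow A s) (A *v v) = A *v sq_apply (flow A s) v"
  using exp_times_scaleR_commute[of s "sq_of A"]
  by (metis flow_def sq_apply_sq_of sq_apply_times)

lemma flow_has_vector_derivative:
  "((\<lambda>s. flow A (c + r * s)) has_vector_derivative r *\<^sub>R (sq_of A * flow A (c + r * s)))
    (at s within T)"
proof -
  have "((\<lambda>s. c + r * s) has_vector_derivative r) (at s within T)"
    by (auto intro!: derivative_eq_intros)
  from vector_diff_chain_within[OF this
      exp_scaleR_has_vector_derivative_left[THEN has_vector_derivative_at_within]]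
  show ?thesis
    by (simp add: o_def flow_def)
qed

lemma continuous_on_flow [continuous_intros]:
  assumes "continuous_on S f"
  shows "continuous_on S (\<lambda>s. flow A (f s))"
proof -
  have "isCont (flow A) s" for s
    using has_vector_derivative_continuous[OF flow_has_vector_derivative[where r = 1 and c = 0]]
    by simp
  then have "continuous_on UNIV (flow A)"
    by (simp add: continuous_at_imp_continuous_on)
  then show ?thesis
    by (rule continuous_on_compose2[OF _ assms]) simp
qed

lemma flow_apply_has_vector_derivative:
  assumes "(x has_vector_derivative x') (at s within T)"
  shows "((\<lambda>s. sq_apply (flow A (c + r * s)) (x s)) has_vector_derivative
           sq_apply (flow A (c + r * s)) (x' + r *\<^sub>R (A *v x s))) (at s within T)"
proof -
  have "((\<lambda>s. sq_apply (flow A (c + r * s)) (x s)) has_vector_derivative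
      sq_apply (flow A (c + r * s)) x' + sq_apply (r *\<^sub>R (sq_of A * flow A (c + r * s))) (x s))
      (at s within T)"
    by (rule bounded_bilinear.has_vector_derivative[OF bounded_bilinear_sq_apply
          flow_has_vector_derivative assms])
  moreover have "sq_apply (r *\<^sub>R (sq_of A * flow A (c + r * s))) (x s)
      = sq_apply (flow A (c + r * s)) (r *\<^sub>R (A *v x s))"
    by (simp add: sq_apply_scaleR_left sq_apply_scaleR_right sq_apply_times sq_apply_flow_matrix)
  ultimately show ?thesis
    by (simp add: sq_apply_add_right)
qed

lemma sq_apply_exp_in_invariant_subspace:
  assumes K: "subspace K" and inv: "\<And>k. k \<in> K \<Longrightarrow> M *v k \<in> K" and k: "k \<in> K"
  shows "sq_apply (exp (sq_of M)) k \<in> K"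
proof -
  have "sq_apply (sq_of M ^ j) k \<in> K" for j
    by (induction j) (simp_all add: k inv sq_apply_times)
  then have summand: "sq_apply (sq_of M ^ j /\<^sub>R fact j) k \<in> K" for j
    by (simp add: sq_apply_scaleR_left subspace_scale[OF K])
  have "(\<lambda>j. sq_apply (sq_of M ^ j /\<^sub>R fact j) k) sums sq_apply (exp (sq_of M)) k"
    unfolding exp_def
    by (rule bounded_linear.sums[OF bounded_bilinear.bounded_linear_left[OF
          bounded_bilinear_sq_apply] summable_sums[OF summable_exp_generic]])
  then show ?thesis
    unfolding sums_def
    by (rule closed_sequentially[OF closed_subspace[OF K], rotated])
      (simp add: summand subspace_sum[OF K])
qed

lemma sq_apply_flow_in_invariant_subspace:
  assumes K: "subspace K" and inv: "\<And>k. k \<in> K \<Longrightarrow> A *v k \<in> K" and k: "k \<in> K"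
  shows "sq_apply (flow A s) k \<in> K"
  unfolding flow_def sq_of_scaleR[symmetric]
  by (rule sq_apply_exp_in_invariant_subspace[OF K _ k])
    (simp add: inv scaleR_matrix_vector_assoc[symmetric] subspace_scale[OF K])

section \<open>The controllability subspace\<close>

definition krylov :: "real^'n^'n \<Rightarrow> real^'m^'n \<Rightarrow> nat \<Rightarrow> (real^'n) set"
  where "krylov A B j = range (\<lambda>y. \<Sum>l<j. (matpow A l ** B) *v y l)"

definition ctrb_image :: "real^'n^'n \<Rightarrow> real^'m^'n \<Rightarrow> (real^'n) set"
  where "ctrb_image A B = krylov A B CARD('n)"

lemma subspace_imageI:
  assumes "z \<in> S" "f z = 0"
    and "\<And>x y. x \<in> S \<Longrightarrow> y \<in> S \<Longrightarrow> \<exists>w\<in>S. f w = f x + f y"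
    and "\<And>c x. x \<in> S \<Longrightarrow> \<exists>w\<in>S. f w = c *\<^sub>R f x"
  shows "subspace (f ` S)"
  unfolding subspace_def
proof (intro conjI ballI allI)
  show "0 \<in> f ` S"
    using assms(1,2) by (metis image_eqI)
  show "u + v \<in> f ` S" if uv: "u \<in> f ` S" "v \<in> f ` S" for u v
  proof -
    obtain x y where "x \<in> S" "y \<in> S" "u = f x" "v = f y"
      using uv by blast
    with assms(3) obtain w where "w \<in> S" "f w = u + v"
      by metis
    then show ?thesis
      by (metis image_eqI)
  qed
  show "c *\<^sub>R u \<in> f ` S" if u: "u \<in> f ` S" for c u
  proof -
    obtain x where "x \<in> S" "u = f x"
      using u by blast
    with assms(4) obtain w where "w \<in> S" "f w = c *\<^sub>R u"
      by metis
    then show ?thesis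
      by (metis image_eqI)
  qed
qed

lemma subspace_krylov: "subspace (krylov A B j)"
  unfolding krylov_def
proof (rule subspace_imageI)
  let ?f = "\<lambda>y. \<Sum>l<j. (matpow A l ** B) *v y l"
  show "?f (\<lambda>_. 0) = 0"
    by simp
  show "\<exists>w\<in>UNIV. ?f w = ?f y + ?f z" for y z
    by (rule bexI[of _ "\<lambda>l. y l + z l"]) (simp_all add: matrix_vector_right_distrib sum.distrib)
  show "\<exists>w\<in>UNIV. ?f w = c *\<^sub>R ?f y" for c y
    by (rule bexI[of _ "\<lambda>l. c *\<^sub>R y l"]) (simp_all add: matrix_vector_mult_scaleR scaleR_sum_right)
qed simp

lemma krylov_Suc: "krylov A B (Suc j) = {B *v y + A *v k | y k. k \<in> krylov A B j}"
proof -
  have split: "(\<Sum>l<Suc j. (matpow A l ** B) *v y l)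
      = B *v y 0 + A *v (\<Sum>l<j. (matpow A l ** B) *v y (Suc l))" for y
    by (simp only: sum.lessThan_Suc_shift) (simp add: matrix_vector_mul_assoc[symmetric] vec.sum)
  show ?thesis
  proof (intro equalityI subsetI)
    fix x assume "x \<in> krylov A B (Suc j)"
    then obtain y where "x = B *v y 0 + A *v (\<Sum>l<j. (matpow A l ** B) *v y (Suc l))"
      unfolding krylov_def split by blast
    moreover have "(\<Sum>l<j. (matpow A l ** B) *v y (Suc l)) \<in> krylov A B j"
      unfolding krylov_def by (rule range_eqI[of _ _ "\<lambda>l. y (Suc l)"]) simp
    ultimately show "x \<in> {B *v y + A *v k | y k. k \<in> krylov A B j}"
      by blast
  next
    fix x assume "x \<in> {B *v y + A *v k | y k. k \<in> krylov A B j}"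
    then obtain y0 z where "x = B *v y0 + A *v (\<Sum>l<j. (matpow A l ** B) *v z l)"
      unfolding krylov_def by blast
    then have "x = (\<Sum>l<Suc j. (matpow A l ** B) *v case_nat y0 z l)"
      by (simp only: split nat.case)
    then show "x \<in> krylov A B (Suc j)"
      unfolding krylov_def by blast
  qed
qed

lemma krylov_subset_Suc: "krylov A B j \<subseteq> krylov A B (Suc j)"
proof (induction j)
  case 0
  have "krylov A B 0 = {0}"
    by (simp add: krylov_def)
  then show ?case
    using subspace_0[OF subspace_krylov] by simp
next
  case (Suc j)
  have "krylov A B (Suc j) = {B *v y + A *v k | y k. k \<in> krylov A B j}"
    by (rule krylov_Suc)
  also have "\<dots> \<subseteq> {B *v y + A *v k | y k. k \<in> krylov A B (Suc j)}"
    using Suc.IH by blast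
  also have "\<dots> = krylov A B (Suc (Suc j))"
    by (rule krylov_Suc[symmetric])
  finally show ?case .
qed

lemma krylov_stable:
  assumes "krylov A B (Suc j) = krylov A B j"
  shows "krylov A B (j + d) = krylov A B j"
proof (induction d)
  case (Suc d)
  have "krylov A B (j + Suc d) = {B *v y + A *v k | y k. k \<in> krylov A B (j + d)}"
    using krylov_Suc by simp
  also have "\<dots> = krylov A B (Suc j)"
    by (simp only: Suc.IH krylov_Suc)
  finally show ?case
    using assms by simp
qed simp

text \<open>In place of Cayley-Hamilton: a strictly increasing chain of subspaces of \<open>\<real>\<^sup>n\<close> has length
  at most \<open>n\<close>, and once the chain stalls it stays constant.\<close>

lemma krylov_stabilizes: "\<exists>j\<le>CARD('n). krylov (A::real^'n^'n) B (Suc j) = krylov A B j"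
proof (rule ccontr)
  assume "\<not> ?thesis"
  then have grow: "krylov A B j \<subset> krylov A B (Suc j)" if "j \<le> CARD('n)" for j
    using that krylov_subset_Suc by blast
  have "j \<le> dim (krylov A B j)" if "j \<le> Suc CARD('n)" for j
    using that
  proof (induction j)
    case (Suc j)
    have "dim (krylov A B j) < dim (krylov A B (Suc j))"
      using grow[of j] Suc.prems
      by (intro dim_psubset) (simp add: span_eq_iff[THEN iffD2, OF subspace_krylov])
    with Suc show ?case
      by simp
  qed simp
  then have "Suc CARD('n) \<le> dim (krylov A B (Suc CARD('n)))"
    by simp
  with dim_subset_UNIV_cart[of "krylov A B (Suc CARD('n))"] show False
    by simp
qed

lemma krylov_Suc_CARD: "krylov (A::real^'n^'n) B (Suc CARD('n)) = krylov A B CARD('n)"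
proof -
  obtain j where "j \<le> CARD('n)" and stable: "krylov A B (Suc j) = krylov A B j"
    using krylov_stabilizes by blast
  then have "krylov A B (j + (Suc CARD('n) - j)) = krylov A B (j + (CARD('n) - j))"
    by (simp only: krylov_stable[OF stable])
  with \<open>j \<le> CARD('n)\<close> show ?thesis
    by simp
qed

lemma subspace_ctrb_image: "subspace (ctrb_image A B)"
  by (simp add: ctrb_image_def subspace_krylov)

lemma ctrb_image_step:
  assumes "k \<in> ctrb_image A B"
  shows "B *v y + A *v k \<in> ctrb_image A B"
  using assms krylov_Suc_CARD[of A B] unfolding ctrb_image_def krylov_Suc by blast

lemma ctrb_image_matrix: "k \<in> ctrb_image A B \<Longrightarrow> A *v k \<in> ctrb_image A B"
  using ctrb_image_step[of k A B 0] by simp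

lemma ctrb_image_input: "B *v y \<in> ctrb_image A B"
  using ctrb_image_step[OF subspace_0[OF subspace_ctrb_image], of B y A] by simp

lemma sq_apply_flow_ctrb_image: "k \<in> ctrb_image A B \<Longrightarrow> sq_apply (flow A s) k \<in> ctrb_image A B"
  by (rule sq_apply_flow_in_invariant_subspace[OF subspace_ctrb_image ctrb_image_matrix])

section \<open>A single snapshot\<close>

lemmas continuous_matrix_vector_mult [continuous_intros] =
  bounded_linear.continuous[OF matrix_vector_mul_bounded_linear]

lemmas continuous_on_matrix_vector_mult [continuous_intros] =
  bounded_linear.continuous_on[OF matrix_vector_mul_bounded_linear]

definition solves_on ::
  "real^'n^'n \<Rightarrow> real^'m^'n \<Rightarrow> real \<Rightarrow> real \<Rightarrow> (real \<Rightarrow> real^'m) \<Rightarrow> (real \<Rightarrow> real^'n) \<Rightarrow> bool"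
  where "solves_on A B a b u x \<longleftrightarrow>
    (\<forall>s\<in>{a..b}. ((\<lambda>\<tau>. A *v x \<tau> + B *v u \<tau>) has_integral (x s - x a)) {a..s})"

lemma solves_on_cong:
  assumes "solves_on A B a b u x"
    and "\<And>s. s \<in> {a..b} \<Longrightarrow> u' s = u s" and "\<And>s. s \<in> {a..b} \<Longrightarrow> x' s = x s"
  shows "solves_on A B a b u' x'"
  unfolding solves_on_def
proof
  fix s assume s: "s \<in> {a..b}"
  then have sol: "((\<lambda>\<tau>. A *v x \<tau> + B *v u \<tau>) has_integral (x s - x a)) {a..s}"
    using assms(1) by (simp add: solves_on_def)
  have "x' s - x' a = x s - x a"
    using s assms(3) by simp
  then show "((\<lambda>\<tau>. A *v x' \<tau> + B *v u' \<tau>) has_integral (x' s - x' a)) {a..s}"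
    using has_integral_eq[OF _ sol, of "\<lambda>\<tau>. A *v x' \<tau> + B *v u' \<tau>"] s assms(2,3) by simp
qed

lemma solves_on_eq_integral:
  assumes "solves_on A B a b u x" and "s \<in> {a..b}"
  shows "x s = x a + integral {a..s} (\<lambda>\<tau>. A *v x \<tau> + B *v u \<tau>)"
proof -
  have "((\<lambda>\<tau>. A *v x \<tau> + B *v u \<tau>) has_integral (x s - x a)) {a..s}"
    using assms by (simp add: solves_on_def)
  then show ?thesis
    by (simp add: integral_unique)
qed

lemma solves_on_continuous_on:
  assumes "solves_on A B a b u x"
  shows "continuous_on {a..b} x"
proof (cases "a \<le> b")
  case True
  have "(\<lambda>\<tau>. A *v x \<tau> + B *v u \<tau>) integrable_on {a..b}"
    using assms True by (auto simp: solves_on_def)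
  then have "continuous_on {a..b} (\<lambda>s. x a + integral {a..s} (\<lambda>\<tau>. A *v x \<tau> + B *v u \<tau>))"
    by (intro continuous_intros indefinite_integral_continuous_1)
  then show ?thesis
    by (rule continuous_on_eq) (rule solves_on_eq_integral[OF assms, symmetric])
qed simp

lemma solves_on_has_vector_derivative:
  assumes sol: "solves_on A B a b u x" and \<tau>: "\<tau> \<in> {a<..<b}" and u: "isCont u \<tau>"
  shows "(x has_vector_derivative A *v x \<tau> + B *v u \<tau>) (at \<tau>)"
proof -
  let ?f = "\<lambda>\<tau>. A *v x \<tau> + B *v u \<tau>"
  have interior: "\<tau> \<in> interior {a..b}"
    using \<tau> by simp
  have "?f integrable_on {a..b}"
    using sol \<tau> by (auto simp: solves_on_def)
  moreover have "isCont ?f \<tau>"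
    using continuous_on_interior[OF solves_on_continuous_on[OF sol] interior] u
    by (intro continuous_intros)
  then have "continuous (at \<tau> within {a..b} - {}) ?f"
    by (simp add: continuous_at_imp_continuous_within)
  ultimately have "((\<lambda>s. integral {a..s} ?f) has_vector_derivative ?f \<tau>) (at \<tau> within {a..b} - {})"
    using \<tau> by (intro integral_has_vector_derivative_continuous_at) auto
  then have "((\<lambda>s. x a + integral {a..s} ?f) has_vector_derivative ?f \<tau>) (at \<tau>)"
    using has_vector_derivative_add[OF has_vector_derivative_const] at_within_interior[OF interior]
    by fastforce
  then show ?thesis
  proof (rule has_vector_derivative_transform_within_open[OF _ open_greaterThanLessThan \<tau>])
    fix y assume "y \<in> {a<..<b}"
    then show "x a + integral {a..y} ?f = x y"
      using solves_on_eq_integral[OF sol, of y] by simp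
  qed
qed

lemma in_subspace_if_orthogonal:
  fixes K :: "'a::euclidean_space set"
  assumes "subspace K" and "\<And>\<eta>. (\<And>k. k \<in> K \<Longrightarrow> \<eta> \<bullet> k = 0) \<Longrightarrow> \<eta> \<bullet> d = 0"
  shows "d \<in> K"
proof -
  have "d \<in> K\<^sup>\<bottom>\<^sup>\<bottom>"
    using assms(2) by (auto simp: orthogonal_comp_def orthogonal_def inner_commute)
  then show ?thesis
    by (simp add: orthogonal_comp_self[OF assms(1)])
qed

text \<open>Along a solution, \<open>exp((b - s) A) x(s)\<close> moves only in the directions \<open>exp((b - s) A) B u(s)\<close>,
  which lie in the invariant subspace \<open>ctrb_image A B\<close>.\<close>

lemma solves_on_increment_in_ctrb_image:
  fixes A :: "real^'n^'n"
  assumes ab: "a \<le> b" and sol: "solves_on A B a b u x"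
    and S: "finite S" and u: "\<And>\<tau>. \<tau> \<in> {a<..<b} - S \<Longrightarrow> isCont u \<tau>"
  shows "x b - sq_apply (flow A (b - a)) (x a) \<in> ctrb_image A B"
proof (rule in_subspace_if_orthogonal[OF subspace_ctrb_image])
  fix \<eta> :: "real^'n" assume orth: "\<And>k. k \<in> ctrb_image A B \<Longrightarrow> \<eta> \<bullet> k = 0"
  define h where "h s = \<eta> \<bullet> sq_apply (flow A (b - s)) (x s)" for s
  have "continuous_on {a..b} h"
    unfolding h_def by (intro continuous_intros solves_on_continuous_on[OF sol])
  moreover have "(h has_vector_derivative 0) (at \<tau>)" if \<tau>: "\<tau> \<in> {a<..<b} - S" for \<tau>
  proof -
    have "((\<lambda>s. sq_apply (flow A (b - s)) (x s)) has_vector_derivative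
        sq_apply (flow A (b - \<tau>)) (B *v u \<tau>)) (at \<tau>)"
      using flow_apply_has_vector_derivative[where A = A and c = b and r = "-1",
          OF solves_on_has_vector_derivative[OF sol _ u[OF \<tau>]]] \<tau> by simp
    moreover have "\<eta> \<bullet> sq_apply (flow A (b - \<tau>)) (B *v u \<tau>) = 0"
      by (intro orth sq_apply_flow_ctrb_image ctrb_image_input)
    ultimately show ?thesis
      unfolding h_def using bounded_linear.has_vector_derivative[OF bounded_linear_inner_right]
      by metis
  qed
  ultimately have "((\<lambda>_. 0) has_integral h b - h a) {a..b}"
    by (intro fundamental_theorem_of_calculus_interior_strong[OF S ab]) auto
  then show "\<eta> \<bullet> (x b - sq_apply (flow A (b - a)) (x a)) = 0"
    by (simp add: h_def inner_diff_right)
qed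

text \<open>Variation of constants: the contribution \<open>\<integral>\<^sub>a\<^sup>b exp((b - \<tau>) A) B u(\<tau>) d\<tau>\<close> of the input
  to \<open>x(b)\<close>, with the factor \<open>exp(b A)\<close> pulled out of the integral.\<close>

definition forced_response ::
  "real^'n^'n \<Rightarrow> real^'m^'n \<Rightarrow> real \<Rightarrow> real \<Rightarrow> (real \<Rightarrow> real^'m) \<Rightarrow> real^'n"
  where "forced_response A B a b u =
    sq_apply (flow A b) (integral {a..b} (\<lambda>\<tau>. sq_apply (flow A (- \<tau>)) (B *v u \<tau>)))"

lemma solves_on_exists:
  assumes ab: "a \<le> b" and u: "continuous_on {a..b} u"
  shows "\<exists>x. solves_on A B a b u x \<and> x a = x0 \<and>
    x b = sq_apply (flow A (b - a)) x0 + forced_response A B a b u"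
proof -
  define g where "g \<tau> = sq_apply (flow A (- \<tau>)) (B *v u \<tau>)" for \<tau>
  define y where "y s = sq_apply (flow A (- a)) x0 + integral {a..s} g" for s
  define x where "x s = sq_apply (flow A s) (y s)" for s
  have xder: "(x has_vector_derivative A *v x s + B *v u s) (at s within {a..b})"
    if s: "s \<in> {a..b}" for s
  proof -
    have "continuous_on {a..b} g"
      unfolding g_def by (intro continuous_intros u)
    then have "(y has_vector_derivative g s) (at s within {a..b})"
      unfolding y_def
      using has_vector_derivative_add[OF has_vector_derivative_const
          integral_has_vector_derivative[OF _ s]]
      by simp
    from flow_apply_has_vector_derivative[where A = A and c = 0 and r = 1, OF this]
    have "(x has_vector_derivative sq_apply (flow A s) (g s + A *v y s)) (at s within {a..b})"
      by (simp add: x_def[abs_def])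
    then show ?thesis
      by (simp add: x_def g_def sq_apply_flow_matrix sq_apply_add_right add.commute)
  qed
  have "solves_on A B a b u x"
    unfolding solves_on_def
  proof
    fix s assume "s \<in> {a..b}"
    then show "((\<lambda>\<tau>. A *v x \<tau> + B *v u \<tau>) has_integral (x s - x a)) {a..s}"
      by (intro fundamental_theorem_of_calculus)
        (auto intro: has_vector_derivative_within_subset[OF xder])
  qed
  moreover have "x a = x0"
    by (simp add: x_def y_def)
  moreover have "x b = sq_apply (flow A (b - a)) x0 + forced_response A B a b u"
    by (simp add: x_def y_def g_def[abs_def] forced_response_def sq_apply_add_right
        flip: sq_apply_times flow_add)
  ultimately show ?thesis
    by blast
qed

lemma orthogonal_flow_matrix:
  assumes S: "open S" and zero: "\<And>\<sigma>. \<sigma> \<in> S \<Longrightarrow> \<eta> \<bullet> sq_apply (flow A (- \<sigma>)) w = 0" and \<tau>: "\<tau> \<in> S"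
  shows "\<eta> \<bullet> sq_apply (flow A (- \<tau>)) (A *v w) = 0"
proof -
  have "((\<lambda>\<sigma>. \<eta> \<bullet> sq_apply (flow A (- \<sigma>)) w) has_vector_derivative
      - (\<eta> \<bullet> sq_apply (flow A (- \<tau>)) (A *v w))) (at \<tau>)"
    using bounded_linear.has_vector_derivative[OF bounded_linear_inner_right
        flow_apply_has_vector_derivative[where A = A and c = 0 and r = "-1",
          OF has_vector_derivative_const]]
    by (simp add: sq_apply_minus_right)
  moreover have "((\<lambda>\<sigma>. \<eta> \<bullet> sq_apply (flow A (- \<sigma>)) w) has_vector_derivative 0) (at \<tau>)"
    by (rule has_vector_derivative_transform_within_open[OF has_vector_derivative_const S \<tau>])
      (simp add: zero)
  ultimately show ?thesis
    using vector_derivative_unique_at by fastforce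
qed

lemma orthogonal_flow_ctrb_image:
  fixes A :: "real^'n^'n"
  assumes S: "open S" and input: "\<And>\<sigma> v. \<sigma> \<in> S \<Longrightarrow> \<eta> \<bullet> sq_apply (flow A (- \<sigma>)) (B *v v) = 0"
    and \<tau>: "\<tau> \<in> S" and k: "k \<in> ctrb_image A B"
  shows "\<eta> \<bullet> sq_apply (flow A (- \<tau>)) k = 0"
proof -
  have column: "\<eta> \<bullet> sq_apply (flow A (- \<sigma>)) ((matpow A l ** B) *v v) = 0" if "\<sigma> \<in> S" for l v \<sigma>
    using that
  proof (induction l arbitrary: v \<sigma>)
    case 0
    then show ?case
      using input by simp
  next
    case (Suc l)
    then show ?case
      using orthogonal_flow_matrix[OF S, of \<eta> A "(matpow A l ** B) *v v"]
      by (simp add: matrix_vector_mul_assoc[symmetric])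
  qed
  obtain y where "k = (\<Sum>l<CARD('n). (matpow A l ** B) *v y l)"
    using k by (auto simp: ctrb_image_def krylov_def)
  then show ?thesis
    by (simp add: sq_apply_sum_right inner_sum_right column[OF \<tau>])
qed

text \<open>The test input is \<open>u = \<phi> q\<close> with \<open>q(\<sigma>) = B\<^sup>T exp(-\<sigma> A\<^sup>T) \<eta>\<close> and a bump \<open>\<phi>\<close> that is positive
  exactly on \<open>(a, b)\<close>: pairing its response with \<open>\<eta>\<close> gives \<open>\<integral> \<phi> |q|\<^sup>2\<close>.\<close>

lemma orthogonal_input_if_orthogonal_responses:
  assumes ab: "a < b"
    and orth: "\<And>u. continuous_on UNIV u \<Longrightarrow> (\<forall>\<sigma>. \<sigma> \<notin> {a<..<b} \<longrightarrow> u \<sigma> = 0) \<Longrightarrow>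
        \<eta> \<bullet> integral {a..b} (\<lambda>\<sigma>. sq_apply (flow A (- \<sigma>)) (B *v u \<sigma>)) = 0"
    and \<tau>: "\<tau> \<in> {a<..<b}"
  shows "\<eta> \<bullet> sq_apply (flow A (- \<tau>)) (B *v v) = 0"
proof -
  define q where "q \<sigma> = (\<chi> j. \<eta> \<bullet> sq_apply (flow A (- \<sigma>)) (column j B))" for \<sigma>
  have q: "\<eta> \<bullet> sq_apply (flow A (- \<sigma>)) (B *v v) = q \<sigma> \<bullet> v" for \<sigma> v
  proof -
    have "\<eta> \<bullet> sq_apply (flow A (- \<sigma>)) (B *v v)
        = (\<Sum>j\<in>UNIV. v $ j * (\<eta> \<bullet> sq_apply (flow A (- \<sigma>)) (column j B)))"
      by (simp add: matrix_mult_sum scalar_mult_eq_scaleR sq_apply_sum_right sq_apply_scaleR_right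
          inner_sum_right)
    then show ?thesis
      unfolding inner_vec_def[of "q \<sigma>" v] by (simp add: q_def mult.commute)
  qed
  define \<phi> where "\<phi> \<sigma> = max 0 ((\<sigma> - a) * (b - \<sigma>))" for \<sigma>
  define u where "u \<sigma> = \<phi> \<sigma> *\<^sub>R q \<sigma>" for \<sigma>
  have "continuous_on UNIV q"
    unfolding q_def by (intro continuous_intros)
  then have cont: "continuous_on UNIV u" "continuous_on UNIV (\<lambda>\<sigma>. \<phi> \<sigma> * (q \<sigma> \<bullet> q \<sigma>))"
    unfolding u_def \<phi>_def by (auto intro!: continuous_intros)
  have "u \<sigma> = 0" if "\<sigma> \<notin> {a<..<b}" for \<sigma>
  proof -
    have "(\<sigma> - a) * (b - \<sigma>) \<le> 0"
      using that ab by (auto simp: mult_le_0_iff)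
    then show ?thesis
      by (simp add: u_def \<phi>_def)
  qed
  then have "0 = \<eta> \<bullet> integral {a..b} (\<lambda>\<sigma>. sq_apply (flow A (- \<sigma>)) (B *v u \<sigma>))"
    using orth cont(1) by simp
  also have "\<dots> = integral {a..b} (\<lambda>\<sigma>. \<eta> \<bullet> sq_apply (flow A (- \<sigma>)) (B *v u \<sigma>))"
    by (subst integral_linear[OF _ bounded_linear_inner_right, symmetric])
      (auto simp: o_def intro!: integrable_continuous_interval continuous_intros
        continuous_on_subset[OF cont(1)])
  also have "\<dots> = integral {a..b} (\<lambda>\<sigma>. \<phi> \<sigma> * (q \<sigma> \<bullet> q \<sigma>))"
    by (simp add: q u_def)
  finally have "\<forall>\<sigma>\<in>{a..b}. \<phi> \<sigma> * (q \<sigma> \<bullet> q \<sigma>) = 0"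
    using integral_eq_0_iff[OF continuous_on_subset[OF cont(2)] ab] by (simp add: \<phi>_def)
  then have "\<phi> \<tau> * (q \<tau> \<bullet> q \<tau>) = 0"
    using \<tau> by simp
  moreover have "\<phi> \<tau> > 0"
    using \<tau> by (simp add: \<phi>_def)
  ultimately have "q \<tau> = 0"
    by simp
  then show ?thesis
    by (simp add: q)
qed

lemma forced_response_onto_ctrb_image:
  fixes A :: "real^'n^'n" and B :: "real^'m^'n"
  assumes ab: "a < b" and w: "w \<in> ctrb_image A B"
  shows "\<exists>u. continuous_on UNIV u \<and> (\<forall>\<tau>. \<tau> \<notin> {a<..<b} \<longrightarrow> u \<tau> = 0) \<and> forced_response A B a b u = w"
proof -
  define U :: "(real \<Rightarrow> real^'m) set"
    where "U = {u. continuous_on UNIV u \<and> (\<forall>\<tau>. \<tau> \<notin> {a<..<b} \<longrightarrow> u \<tau> = 0)}"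
  define I where "I u = integral {a..b} (\<lambda>\<tau>. sq_apply (flow A (- \<tau>)) (B *v u \<tau>))" for u
  have integrable: "(\<lambda>\<tau>. sq_apply (flow A (- \<tau>)) (B *v u \<tau>)) integrable_on {a..b}" if "u \<in> U" for u
    using that unfolding U_def
    by (intro integrable_continuous_interval continuous_intros) (auto intro: continuous_on_subset)
  have "subspace (I ` U)"
  proof (rule subspace_imageI)
    show "(\<lambda>_. 0) \<in> U" "I (\<lambda>_. 0) = 0"
      by (simp_all add: U_def I_def sq_apply_zero_right)
    show "\<exists>w\<in>U. I w = I u + I v" if "u \<in> U" "v \<in> U" for u v
      using that integrable[OF that(1)] integrable[OF that(2)]
      by (intro bexI[of _ "\<lambda>\<tau>. u \<tau> + v \<tau>"])
        (auto simp: U_def I_def matrix_vector_right_distrib sq_apply_add_right integral_add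
          intro: continuous_intros)
    show "\<exists>w\<in>U. I w = c *\<^sub>R I u" if "u \<in> U" for c u
      using that
      by (intro bexI[of _ "\<lambda>\<tau>. c *\<^sub>R u \<tau>"])
        (auto simp: U_def I_def matrix_vector_mult_scaleR sq_apply_scaleR_right
          intro: continuous_intros)
  qed
  have "ctrb_image A B \<subseteq> I ` U"
  proof
    fix k assume k: "k \<in> ctrb_image A B"
    show "k \<in> I ` U"
    proof (rule in_subspace_if_orthogonal[OF \<open>subspace (I ` U)\<close>])
      fix \<eta> assume orth: "\<And>r. r \<in> I ` U \<Longrightarrow> \<eta> \<bullet> r = 0"
      have input: "\<eta> \<bullet> sq_apply (flow A (- \<sigma>)) (B *v v) = 0" if "\<sigma> \<in> {a<..<b}" for \<sigma> v
        by (rule orthogonal_input_if_orthogonal_responses[OF ab _ that])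
          (simp add: orth U_def I_def)
      define \<tau> where "\<tau> = (a + b) / 2"
      have "\<tau> \<in> {a<..<b}"
        using ab by (simp add: \<tau>_def)
      from orthogonal_flow_ctrb_image[OF open_greaterThanLessThan input this
          sq_apply_flow_ctrb_image[OF k, of \<tau>]]
      show "\<eta> \<bullet> k = 0"
        by simp
    qed
  qed
  with w obtain u where "u \<in> U" "I u = sq_apply (flow A (- b)) w"
    using sq_apply_flow_ctrb_image by (metis imageE subsetD)
  then show ?thesis
    unfolding U_def by (auto simp: forced_response_def I_def[symmetric])
qed

section \<open>Switching systems\<close>

lemma foldl_matrix_mult:
  fixes F :: "nat \<Rightarrow> real^'n^'n" and M0 :: "real^'n^'n"
  shows "foldl (\<lambda>M j. M ** F j) M0 js = M0 ** foldl (\<lambda>M j. M ** F j) (mat 1) js"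
proof (induction js arbitrary: M0)
  case (Cons j js)
  have "foldl (\<lambda>M j. M ** F j) M0 (j # js) = (M0 ** F j) ** foldl (\<lambda>M j. M ** F j) (mat 1) js"
    by (simp only: foldl_Cons Cons.IH[of "M0 ** F j"])
  also have "\<dots> = M0 ** (F j ** foldl (\<lambda>M j. M ** F j) (mat 1) js)"
    by (simp add: matrix_mul_assoc)
  also have "F j ** foldl (\<lambda>M j. M ** F j) (mat 1) js = foldl (\<lambda>M j. M ** F j) (mat 1) (j # js)"
    by (simp only: foldl_Cons matrix_mul_lid Cons.IH[of "F j"])
  finally show ?case .
qed simp

lemma transition_same [simp]: "transition A t q q = mat 1"
  by (simp add: transition_def)

lemma transition_Suc:
  fixes A :: "nat \<Rightarrow> real^'n^'n"
  assumes "k \<le> q"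
  shows "transition A t (Suc q) k = mat_exp (dt t (Suc q) *\<^sub>R A (Suc q)) ** transition A t q k"
proof -
  define E where "E = mat_exp (dt t (Suc q) *\<^sub>R A (Suc q))"
  define f where "f M j = M ** mat_exp (dt t j *\<^sub>R A j)" for M :: "real^'n^'n" and j
  have split: "rev [Suc k..<Suc (Suc q)] = Suc q # rev [Suc k..<Suc q]"
    using assms by simp
  have "transition A t (Suc q) k = foldl f (mat 1 ** E) (rev [Suc k..<Suc q])"
    unfolding transition_def split f_def[abs_def] E_def by simp
  also have "\<dots> = (mat 1 ** E) ** foldl f (mat 1) (rev [Suc k..<Suc q])"
    unfolding f_def[abs_def] by (rule foldl_matrix_mult)
  also have "\<dots> = E ** transition A t q k"
    by (simp add: transition_def f_def[abs_def])
  finally show ?thesis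
    unfolding E_def .
qed

lemma transition_Suc_apply:
  assumes "k \<le> q"
  shows "transition A t (Suc q) k *v v
    = sq_apply (flow (A (Suc q)) (t (Suc q) - t q)) (transition A t q k *v v)"
  using assms
  by (simp add: transition_Suc matrix_vector_mul_assoc[symmetric] mat_exp_scaleR_apply dt_def)

lemma temporal_ctrb_apply_Suc:
  fixes A :: "nat \<Rightarrow> real^'n^'n"
  shows "temporal_ctrb_apply A B t (Suc q) y =
    sq_apply (flow (A (Suc q)) (t (Suc q) - t q)) (temporal_ctrb_apply A B t q y)
      + (\<Sum>l<CARD('n). (matpow (A (Suc q)) l ** B) *v y (Suc q) l)"
proof -
  let ?E = "mat_exp (dt t (Suc q) *\<^sub>R A (Suc q))"
  let ?T = "\<lambda>q k. \<Sum>l<CARD('n). (transition A t q k ** matpow (A k) l ** B) *v y k l"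
  have "?T (Suc q) k = ?E *v ?T q k" if "k \<in> {1..q}" for k
    using that by (simp add: transition_Suc vec.sum matrix_vector_mul_assoc matrix_mul_assoc)
  then have "(\<Sum>k\<in>{1..q}. ?T (Suc q) k) = ?E *v temporal_ctrb_apply A B t q y"
    by (simp add: temporal_ctrb_apply_def vec.sum)
  moreover have "temporal_ctrb_apply A B t (Suc q) y
      = (\<Sum>k\<in>{1..q}. ?T (Suc q) k) + ?T (Suc q) (Suc q)"
    by (simp add: temporal_ctrb_apply_def atLeastAtMostSuc_conv add.commute)
  ultimately show ?thesis
    by (simp add: mat_exp_scaleR_apply dt_def)
qed

lemma temporal_ctrb_image_0: "temporal_ctrb_image A B t 0 = {0}"
  by (simp add: temporal_ctrb_image_def temporal_ctrb_apply_def)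

lemma temporal_ctrb_image_Suc:
  fixes A :: "nat \<Rightarrow> real^'n^'n"
  shows "temporal_ctrb_image A B t (Suc q) =
    {sq_apply (flow (A (Suc q)) (t (Suc q) - t q)) v + w | v w.
      v \<in> temporal_ctrb_image A B t q \<and> w \<in> ctrb_image (A (Suc q)) B}"
proof (intro equalityI subsetI)
  fix x assume "x \<in> temporal_ctrb_image A B t (Suc q)"
  then obtain y where "x = temporal_ctrb_apply A B t (Suc q) y"
    by (auto simp: temporal_ctrb_image_def)
  then show "x \<in> {sq_apply (flow (A (Suc q)) (t (Suc q) - t q)) v + w | v w.
      v \<in> temporal_ctrb_image A B t q \<and> w \<in> ctrb_image (A (Suc q)) B}"
    unfolding temporal_ctrb_apply_Suc temporal_ctrb_image_def ctrb_image_def krylov_def by blast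
next
  fix x assume "x \<in> {sq_apply (flow (A (Suc q)) (t (Suc q) - t q)) v + w | v w.
      v \<in> temporal_ctrb_image A B t q \<and> w \<in> ctrb_image (A (Suc q)) B}"
  then obtain y z
    where x: "x = sq_apply (flow (A (Suc q)) (t (Suc q) - t q)) (temporal_ctrb_apply A B t q y)
      + (\<Sum>l<CARD('n). (matpow (A (Suc q)) l ** B) *v z l)"
    by (auto simp: temporal_ctrb_image_def ctrb_image_def krylov_def)
  have "temporal_ctrb_apply A B t q (y(Suc q := z)) = temporal_ctrb_apply A B t q y"
    unfolding temporal_ctrb_apply_def by (intro sum.cong) auto
  then have "x = temporal_ctrb_apply A B t (Suc q) (y(Suc q := z))"
    by (simp add: x temporal_ctrb_apply_Suc)
  then show "x \<in> temporal_ctrb_image A B t (Suc q)"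
    by (auto simp: temporal_ctrb_image_def)
qed

lemma temporal_ctrb_image_scaleR:
  assumes "v \<in> temporal_ctrb_image A B t q"
  shows "c *\<^sub>R v \<in> temporal_ctrb_image A B t q"
proof -
  obtain y where "v = temporal_ctrb_apply A B t q y"
    using assms by (auto simp: temporal_ctrb_image_def)
  then have "c *\<^sub>R v = temporal_ctrb_apply A B t q (\<lambda>k l. c *\<^sub>R y k l)"
    by (simp add: temporal_ctrb_apply_def scaleR_sum_right matrix_vector_mult_scaleR)
  then show ?thesis
    by (auto simp: temporal_ctrb_image_def)
qed

lemma increasing_times_mono:
  assumes "\<And>i. i < q \<Longrightarrow> t i < t (Suc i)" and "i \<le> j" and "j \<le> q"
  shows "t i \<le> (t j :: real)"
  using lift_Suc_mono_le_ivl[of "{..<q}" t i j] assms by (simp add: less_imp_le subset_eq)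

lemma is_switching_solution_0 [simp]: "is_switching_solution A B t 0 u x"
  by (simp add: is_switching_solution_def)

lemma is_switching_solution_Suc:
  "is_switching_solution A B t (Suc q) u x \<longleftrightarrow>
    is_switching_solution A B t q u x \<and> solves_on (A (Suc q)) B (t q) (t (Suc q)) u x"
  by (auto simp: is_switching_solution_def solves_on_def atLeastAtMostSuc_conv)

lemma is_switching_solution_cong:
  assumes inc: "\<And>i. i < q \<Longrightarrow> t i < t (Suc i)" and sol: "is_switching_solution A B t q u x"
    and "\<And>s. s \<le> t q \<Longrightarrow> u' s = u s" and "\<And>s. s \<le> t q \<Longrightarrow> x' s = x s"
  shows "is_switching_solution A B t q u' x'"
  unfolding is_switching_solution_def solves_on_def[symmetric]
proof
  fix i assume i: "i \<in> {1..q}"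
  have "t i \<le> t q"
    using increasing_times_mono[of q t i q] inc i by simp
  moreover have "solves_on (A i) B (t (i - 1)) (t i) u x"
    using sol i by (simp add: is_switching_solution_def solves_on_def)
  ultimately show "solves_on (A i) B (t (i - 1)) (t i) u' x'"
    using assms(3,4) by (auto elim!: solves_on_cong)
qed

lemma switching_solution_in_temporal_ctrb_image:
  assumes inc: "\<And>i. i < q \<Longrightarrow> t i < t (Suc i)" and S: "finite S"
    and u: "\<And>\<tau>. \<tau> \<in> {t 0<..<t q} - S \<Longrightarrow> isCont u \<tau>"
    and sol: "is_switching_solution A B t q u x" and x0: "x (t 0) = 0"
  shows "x (t q) \<in> temporal_ctrb_image A B t q"
  using inc u sol
proof (induction q)
  case 0
  then show ?case
    using x0 by (simp add: temporal_ctrb_image_0)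
next
  case (Suc q)
  have le: "t 0 \<le> t q" "t q < t (Suc q)"
    using increasing_times_mono[of "Suc q" t 0 q] Suc.prems(1) by auto
  have sol: "is_switching_solution A B t q u x" "solves_on (A (Suc q)) B (t q) (t (Suc q)) u x"
    using Suc.prems(3) by (simp_all add: is_switching_solution_Suc)
  have "isCont u \<tau>" if "\<tau> \<in> {t 0<..<t q} - S" for \<tau>
    using that le(2) by (intro Suc.prems(2)) auto
  then have "x (t q) \<in> temporal_ctrb_image A B t q"
    using Suc.IH Suc.prems(1) sol(1) by simp
  moreover have "isCont u \<tau>" if "\<tau> \<in> {t q<..<t (Suc q)} - S" for \<tau>
    using that le(1) by (intro Suc.prems(2)) auto
  then have "x (t (Suc q)) - sq_apply (flow (A (Suc q)) (t (Suc q) - t q)) (x (t q))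
      \<in> ctrb_image (A (Suc q)) B"
    using solves_on_increment_in_ctrb_image[OF less_imp_le[OF le(2)] sol(2) S] by blast
  ultimately show ?case
    unfolding temporal_ctrb_image_Suc by force
qed

lemma forced_response_cong:
  assumes "\<And>\<tau>. \<tau> \<in> {a..b} \<Longrightarrow> u' \<tau> = u \<tau>"
  shows "forced_response A B a b u' = forced_response A B a b u"
  unfolding forced_response_def by (metis (no_types, lifting) assms integral_cong)

lemma is_switching_solution_snoc:
  assumes inc: "\<And>i. i < Suc q \<Longrightarrow> t i < t (Suc i)"
    and sol: "is_switching_solution A B t q u x" and u: "continuous_on {t q..t (Suc q)} u"
  shows "\<exists>x'. is_switching_solution A B t (Suc q) u x' \<and> x' (t 0) = x (t 0) \<and>
    x' (t (Suc q)) = sq_apply (flow (A (Suc q)) (t (Suc q) - t q)) (x (t q))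
      + forced_response (A (Suc q)) B (t q) (t (Suc q)) u"
proof -
  have le: "t 0 \<le> t q" "t q < t (Suc q)"
    using increasing_times_mono[of "Suc q" t 0 q] inc by auto
  obtain y where y: "solves_on (A (Suc q)) B (t q) (t (Suc q)) u y" "y (t q) = x (t q)"
    "y (t (Suc q)) = sq_apply (flow (A (Suc q)) (t (Suc q) - t q)) (x (t q))
      + forced_response (A (Suc q)) B (t q) (t (Suc q)) u"
    using solves_on_exists[OF less_imp_le[OF le(2)] u] by blast
  define x' where "x' s = (if s \<le> t q then x s else y s)" for s
  have "is_switching_solution A B t q u x'"
    using inc sol by (rule is_switching_solution_cong) (simp_all add: x'_def)
  moreover have "solves_on (A (Suc q)) B (t q) (t (Suc q)) u x'"
    using y(1) by (rule solves_on_cong) (auto simp: x'_def y(2))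
  ultimately show ?thesis
    using le y(3) by (intro exI[of _ x']) (simp add: x'_def is_switching_solution_Suc)
qed

text \<open>The control is kept supported in \<open>(t\<^sub>0, t\<^sub>q)\<close>, so that the control steering the next
  snapshot can simply be added to it.\<close>

lemma temporal_ctrb_image_reachable:
  assumes "\<And>i. i < q \<Longrightarrow> t i < t (Suc i)" and "v \<in> temporal_ctrb_image A B t q"
  shows "\<exists>u x. continuous_on UNIV u \<and> (\<forall>\<tau>. \<tau> \<notin> {t 0<..<t q} \<longrightarrow> u \<tau> = 0) \<and>
    is_switching_solution A B t q u x \<and> x (t 0) = x0 \<and> x (t q) = transition A t q 0 *v x0 + v"
  using assms
proof (induction q arbitrary: v)
  case 0
  then show ?case
    by (intro exI[of _ "\<lambda>_. 0"] exI[of _ "\<lambda>_. x0"]) (simp add: temporal_ctrb_image_0)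
next
  case (Suc q)
  let ?E = "sq_apply (flow (A (Suc q)) (t (Suc q) - t q))"
  have le: "t 0 \<le> t q" "t q < t (Suc q)"
    using increasing_times_mono[of "Suc q" t 0 q] Suc.prems(1) by auto
  obtain v' w where v: "v = ?E v' + w" and v': "v' \<in> temporal_ctrb_image A B t q"
    and w: "w \<in> ctrb_image (A (Suc q)) B"
    using Suc.prems(2) unfolding temporal_ctrb_image_Suc by blast
  obtain u x where u: "continuous_on UNIV u" "\<forall>\<tau>. \<tau> \<notin> {t 0<..<t q} \<longrightarrow> u \<tau> = 0"
    and x: "is_switching_solution A B t q u x" "x (t 0) = x0"
      "x (t q) = transition A t q 0 *v x0 + v'"
    using Suc.IH[OF _ v'] Suc.prems(1) by auto
  obtain u' where u': "continuous_on UNIV u'" "\<forall>\<tau>. \<tau> \<notin> {t q<..<t (Suc q)} \<longrightarrow> u' \<tau> = 0"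
    "forced_response (A (Suc q)) B (t q) (t (Suc q)) u' = w"
    using forced_response_onto_ctrb_image[OF le(2) w] by blast
  let ?u = "\<lambda>\<tau>. u \<tau> + u' \<tau>"
  have sol: "is_switching_solution A B t q ?u x"
    using Suc.prems(1) x(1) by (rule is_switching_solution_cong) (simp_all add: u'(2))
  have "continuous_on {t q..t (Suc q)} ?u"
    using u(1) u'(1) by (auto intro: continuous_intros continuous_on_subset)
  then obtain x' where x': "is_switching_solution A B t (Suc q) ?u x'" "x' (t 0) = x0"
    "x' (t (Suc q)) = ?E (x (t q)) + forced_response (A (Suc q)) B (t q) (t (Suc q)) ?u"
    using is_switching_solution_snoc[where q = q and t = t, OF Suc.prems(1) sol] x(2) by auto
  have "forced_response (A (Suc q)) B (t q) (t (Suc q)) ?u = w"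
    using u(2) u'(3) by (subst forced_response_cong[where u = u']) auto
  then have "x' (t (Suc q)) = transition A t (Suc q) 0 *v x0 + v"
    by (simp add: x'(3) x(3) v transition_Suc_apply sq_apply_add_right)
  moreover have "\<forall>\<tau>. \<tau> \<notin> {t 0<..<t (Suc q)} \<longrightarrow> ?u \<tau> = 0"
    using u(2) u'(2) le by auto
  ultimately show ?case
    using u(1) u'(1) x' by (intro exI[of _ ?u] exI[of _ x']) (auto intro: continuous_intros)
qed

lemma piecewise_continuous_onE:
  assumes "piecewise_continuous_on a b u"
  obtains S where "finite S" "\<And>\<tau>. \<tau> \<in> {a<..<b} - S \<Longrightarrow> isCont u \<tau>"
proof -
  obtain S where S: "finite S" "continuous_on ({a..b} - S) u"
    using assms unfolding piecewise_continuous_on_def by blast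
  have "open ({a<..<b} - S)"
    using S(1) by (intro open_Diff finite_imp_closed) auto
  moreover have "continuous_on ({a<..<b} - S) u"
    by (rule continuous_on_subset[OF S(2)]) auto
  ultimately have "isCont u \<tau>" if "\<tau> \<in> {a<..<b} - S" for \<tau>
    using that continuous_on_eq_continuous_at by blast
  then show ?thesis
    using S(1) that by blast
qed

lemma continuous_on_imp_piecewise_continuous_on:
  "continuous_on {a..b} u \<Longrightarrow> piecewise_continuous_on a b u"
  unfolding piecewise_continuous_on_def by (intro exI[of _ "{}"]) simp

lemma positive_vector_dominates:
  fixes v z :: "real^'n"
  assumes "\<forall>j. v $ j > 0"
  shows "\<exists>c. \<forall>j. h \<le> z $ j + c * v $ j"
proof (intro exI allI)
  let ?c = "\<Sum>j\<in>UNIV. \<bar>h - z $ j\<bar> / v $ j"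
  fix j
  have "\<bar>h - z $ j\<bar> / v $ j \<le> ?c"
    by (rule member_le_sum) (use assms in \<open>auto intro!: divide_nonneg_pos\<close>)
  then have "\<bar>h - z $ j\<bar> \<le> ?c * v $ j"
    using assms by (simp add: pos_divide_le_eq)
  then show "h \<le> z $ j + ?c * v $ j"
    by linarith
qed

lemma completely_herdable_imp_positive_in_image:
  assumes inc: "\<And>i. i < p \<Longrightarrow> t i < t (Suc i)" and "completely_herdable A B t p"
  shows "\<exists>v. (\<forall>j. v $ j > 0) \<and> v \<in> temporal_ctrb_image A B t p"
proof -
  obtain u x where u: "piecewise_continuous_on (t 0) (t p) u"
    and x: "is_switching_solution A B t p u x" "x (t 0) = 0" "\<forall>j. 1 \<le> x (t p) $ j"
    using assms(2) zero_less_one unfolding completely_herdable_def by blast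
  obtain S where "finite S" "\<And>\<tau>. \<tau> \<in> {t 0<..<t p} - S \<Longrightarrow> isCont u \<tau>"
    using piecewise_continuous_onE[OF u] by metis
  then have "x (t p) \<in> temporal_ctrb_image A B t p"
    using switching_solution_in_temporal_ctrb_image[where q = p and t = t, OF inc] x(1,2) by blast
  then show ?thesis
    using x(3) by (intro exI[of _ "x (t p)"]) (auto intro: less_le_trans[OF zero_less_one])
qed

lemma positive_in_image_imp_completely_herdable:
  assumes inc: "\<And>i. i < p \<Longrightarrow> t i < t (Suc i)"
    and v: "\<forall>j. v $ j > 0" "v \<in> temporal_ctrb_image A B t p"
  shows "completely_herdable A B t p"
  unfolding completely_herdable_def
proof (intro allI impI)
  fix x0 h
  obtain c where c: "\<forall>j. h \<le> (transition A t p 0 *v x0) $ j + c * v $ j"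
    using positive_vector_dominates[OF v(1)] by blast
  obtain u x where u: "continuous_on UNIV u"
    and x: "is_switching_solution A B t p u x" "x (t 0) = x0"
      "x (t p) = transition A t p 0 *v x0 + c *\<^sub>R v"
    using temporal_ctrb_image_reachable[where q = p and t = t,
        OF inc temporal_ctrb_image_scaleR[OF v(2)]]
    by blast
  then show "\<exists>u. piecewise_continuous_on (t 0) (t p) u \<and>
      (\<exists>x. is_switching_solution A B t p u x \<and> x (t 0) = x0 \<and> (\<forall>j. h \<le> x (t p) $ j))"
    using c continuous_on_imp_piecewise_continuous_on[OF continuous_on_subset[OF u]]
    by (intro exI[of _ u] exI[of _ x]) auto
qed

theorem mainTheorem1:
  fixes A :: "nat \<Rightarrow> real^'n^'n" and B :: "real^'m^'n"
    and t :: "nat \<Rightarrow> real" and p :: nat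
  assumes "p \<ge> 1"
    and "\<And>i. i < p \<Longrightarrow> t i < t (Suc i)"
  shows "completely_herdable A B t p \<longleftrightarrow>
         (\<exists>v :: real^'n. (\<forall>j. v $ j > 0) \<and> v \<in> temporal_ctrb_image A B t p)"
  using completely_herdable_imp_positive_in_image[where p = p and t = t, OF assms(2)]
    positive_in_image_imp_completely_herdable[where p = p and t = t, OF assms(2)]
  by blast

end
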